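(* Given an $n$-qubit state $\lvert\psi\rangle$, let $\lvert\phi\rangle$ be a stabilizer state that maximizes the stabilizer fidelity, and let $S^* = \mathrm{Weyl}(\lvert\phi\rangle)$. Let $T \subseteq S^*$ be a subspace of $S^*$. Then \[ \sum_{x \in T} p_\psi(x) \geq \frac{\lvert T\rvert}{2^n} F_\mathcal{S}(\lvert\psi\rangle)^2. \]
   Context: For $x=(a,b)\in\mathbb F_2^{2n}$ the Weyl operator is $W_x = i^{a\cdot b}X^{a_1}Z^{b_1}\otimes\cdots\otimes X^{a_n}Z^{b_n}$; $p_\psi(x)=2^{-n}\langle\psi|W_x|\psi\rangle^2$; $\mathrm{Weyl}(\lvert\phi\rangle)=\{x\in\mathbb F_2^{2n}: W_x\lvert\phi\rangle=\pm\lvert\phi\rangle\}$ (a subspace of $\mathbb F_2^{2n}$); $F_\mathcal{S}(\lvert\psi\rangle)=\max_{\lvert\phi\rangle\text{ stabilizer}}\lvert\langle\phi|\psi\rangle\rvert^2$. *)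

theory Defs
  imports Complex_Main
begin

text \<open>Computational basis of n qubits: bit strings z with z i = False for i >= n.
  An n-qubit vector is a function from bit strings to complex amplitudes, vanishing
  outside the basis index set.\<close>

type_synonym bits = "nat \<Rightarrow> bool"
type_synonym qstate = "bits \<Rightarrow> complex"

definition bitstrs :: "nat \<Rightarrow> bits set" where
  "bitstrs n = {z. \<forall>i. n \<le> i \<longrightarrow> \<not> z i}"

definition bxor :: "bits \<Rightarrow> bits \<Rightarrow> bits" where
  "bxor a b = (\<lambda>i. a i \<noteq> b i)"

definition bdot :: "nat \<Rightarrow> bits \<Rightarrow> bits \<Rightarrow> nat" where
  "bdot n a b = card {i. i < n \<and> a i \<and> b i}"

definition F2 :: "nat \<Rightarrow> (bits \<times> bits) set" where
  "F2 n = bitstrs n \<times> bitstrs n"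

definition vxor :: "bits \<times> bits \<Rightarrow> bits \<times> bits \<Rightarrow> bits \<times> bits" where
  "vxor x y = (bxor (fst x) (fst y), bxor (snd x) (snd y))"

definition zero_bits :: bits where "zero_bits = (\<lambda>_. False)"

text \<open>Weyl operator W_(a,b) = i^(a.b) X^(a_1) Z^(b_1) (x) ... (x) X^(a_n) Z^(b_n):
  it maps |w> to i^(a.b) (-1)^(b.w) |w xor a>, hence
  (W psi)(z) = i^(a.b) (-1)^(b.(z xor a)) psi(z xor a).\<close>
definition weyl :: "nat \<Rightarrow> bits \<times> bits \<Rightarrow> qstate \<Rightarrow> qstate" where
  "weyl n x psi = (\<lambda>z. if z \<in> bitstrs n then
      \<i> ^ bdot n (fst x) (snd x) * (-1) ^ bdot n (snd x) (bxor z (fst x))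
        * psi (bxor z (fst x))
    else 0)"

definition qinner :: "nat \<Rightarrow> qstate \<Rightarrow> qstate \<Rightarrow> complex" where
  "qinner n phi psi = (\<Sum>z\<in>bitstrs n. cnj (phi z) * psi z)"

definition is_state :: "nat \<Rightarrow> qstate \<Rightarrow> bool" where
  "is_state n psi \<longleftrightarrow> (\<forall>z. z \<notin> bitstrs n \<longrightarrow> psi z = 0) \<and> qinner n psi psi = 1"

text \<open>p_psi(x) = 2^(-n) <psi|W_x|psi>^2 (the expectation value is real).\<close>
definition pdist :: "nat \<Rightarrow> qstate \<Rightarrow> bits \<times> bits \<Rightarrow> real" where
  "pdist n psi x = Re ((qinner n psi (weyl n x psi))\<^sup>2) / 2 ^ n"

definition Weyl :: "nat \<Rightarrow> qstate \<Rightarrow> (bits \<times> bits) set" where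
  "Weyl n phi = {x \<in> F2 n. weyl n x phi = phi \<or> weyl n x phi = (\<lambda>z. - phi z)}"

definition stabilizer_state :: "nat \<Rightarrow> qstate \<Rightarrow> bool" where
  "stabilizer_state n phi \<longleftrightarrow> is_state n phi \<and> card (Weyl n phi) = 2 ^ n"

definition stab_fidelity :: "nat \<Rightarrow> qstate \<Rightarrow> real" where
  "stab_fidelity n psi = (SUP phi\<in>{phi. stabilizer_state n phi}. (cmod (qinner n phi psi))\<^sup>2)"

definition F2_subspace :: "nat \<Rightarrow> (bits \<times> bits) set \<Rightarrow> bool" where
  "F2_subspace n T \<longleftrightarrow> T \<subseteq> F2 n \<and> (zero_bits, zero_bits) \<in> T
     \<and> (\<forall>x\<in>T. \<forall>y\<in>T. vxor x y \<in> T)"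

end

theory Submission
  imports Defs "HOL-Analysis.Convex"
begin

text \<open>Let \<open>s\<^sub>x = \<plusminus>1\<close> be the eigenvalue of \<open>W\<^sub>x\<close> on \<open>\<phi>\<close> for \<open>x \<in> T\<close>. The operators \<open>s\<^sub>x W\<^sub>x\<close> form
  a group isomorphic to \<open>T\<close>, so \<open>P = |T|\<^sup>-\<^sup>1 \<Sum>\<^sub>x s\<^sub>x W\<^sub>x\<close> is an orthogonal projector fixing \<open>\<phi>\<close>.
  Hence \<open>|\<langle>\<phi>|\<psi>\<rangle>|\<^sup>2 = |\<langle>\<phi>|P\<psi>\<rangle>|\<^sup>2 \<le> \<langle>\<psi>|P|\<psi>\<rangle> = |T|\<^sup>-\<^sup>1 \<Sum>\<^sub>x s\<^sub>x \<langle>\<psi>|W\<^sub>x|\<psi>\<rangle>\<close>, and the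
  Cauchy-Schwarz inequality \<open>(\<Sum>\<^sub>x r\<^sub>x)\<^sup>2 \<le> |T| \<Sum>\<^sub>x r\<^sub>x\<^sup>2\<close> turns this into the bound on
  \<open>\<Sum>\<^sub>x p\<^sub>\<psi>(x) = 2\<^sup>-\<^sup>n \<Sum>\<^sub>x \<langle>\<psi>|W\<^sub>x|\<psi>\<rangle>\<^sup>2\<close>.\<close>

lemma bdot_0 [simp]: "bdot 0 a b = 0"
  by (simp add: bdot_def)

lemma bdot_Suc: "bdot (Suc n) a b = bdot n a b + (if a n \<and> b n then 1 else 0)"
proof -
  have "{i. i < Suc n \<and> a i \<and> b i} = {i. i < n \<and> a i \<and> b i} \<union> (if a n \<and> b n then {n} else {})"
    by (auto simp: less_Suc_eq)
  then show ?thesis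
    unfolding bdot_def by (simp add: card_insert_if)
qed

lemma bdot_commute: "bdot n a b = bdot n b a"
  unfolding bdot_def by (metis (mono_tags, lifting) Collect_cong)

lemma even_bdot_bxor_right: "even (bdot n b u + bdot n b a + bdot n b (bxor u a))"
  by (induction n) (auto simp: bdot_Suc bxor_def)

lemma even_bdot_bxor_left: "even (bdot n b w + bdot n b' w + bdot n (bxor b b') w)"
  by (induction n) (auto simp: bdot_Suc bxor_def)

lemma minus_one_power_bdot_bxor_right:
  "(-1::complex) ^ bdot n b (bxor u a) = (-1) ^ bdot n b u * (-1) ^ bdot n b a"
  using even_bdot_bxor_right[of n b u a]
  by (auto simp: minus_one_power_iff)

lemma minus_one_power_bdot_bxor_left:
  "(-1::complex) ^ bdot n (bxor b b') w = (-1) ^ bdot n b w * (-1) ^ bdot n b' w"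
  using even_bdot_bxor_left[of n b w b']
  by (auto simp: minus_one_power_iff)

lemma bxor_in_bitstrs: "u \<in> bitstrs n \<Longrightarrow> a \<in> bitstrs n \<Longrightarrow> bxor u a \<in> bitstrs n"
  by (auto simp: bitstrs_def bxor_def)

lemma bxor_bxor_cancel [simp]: "bxor (bxor u a) a = u"
  by (auto simp: bxor_def)

lemma bxor_assoc: "bxor (bxor u a) b = bxor u (bxor a b)"
  by (auto simp: bxor_def)

lemma vxor_vxor_cancel [simp]: "vxor x (vxor x y) = y"
  by (cases x; cases y) (auto simp: vxor_def bxor_def fun_eq_iff)

lemma finite_bitstrs: "finite (bitstrs n)"
proof -
  have "bitstrs n \<subseteq> (\<lambda>S i. i \<in> S) ` Pow {..<n}"
  proof
    fix z assume "z \<in> bitstrs n"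
    then have "z = (\<lambda>i. i \<in> {i. z i})" and "{i. z i} \<in> Pow {..<n}"
      by (auto simp: bitstrs_def not_le[symmetric])
    then show "z \<in> (\<lambda>S i. i \<in> S) ` Pow {..<n}" by blast
  qed
  then show ?thesis
    by (rule finite_surj[OF finite_Pow_iff[THEN iffD2, OF finite_lessThan]])
qed

lemma finite_F2: "finite (F2 n)"
  by (simp add: F2_def finite_bitstrs)

lemma F2_subspace_sum_translate:
  fixes h :: "bits \<times> bits \<Rightarrow> 'a::comm_monoid_add"
  assumes "F2_subspace n T" "x \<in> T"
  shows "(\<Sum>y\<in>T. h (vxor x y)) = (\<Sum>y\<in>T. h y)"
proof -
  have "bij_betw (vxor x) T T"
    by (rule bij_betwI[where g = "vxor x"]) (use assms in \<open>auto simp: F2_subspace_def\<close>)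
  then show ?thesis
    by (rule sum.reindex_bij_betw)
qed

lemma qinner_sum_right: "qinner n f (\<lambda>z. \<Sum>x\<in>T. h x z) = (\<Sum>x\<in>T. qinner n f (h x))"
  unfolding qinner_def by (simp add: sum_distrib_left sum.swap[of _ T])

lemma qinner_sum_left: "qinner n (\<lambda>z. \<Sum>x\<in>T. h x z) g = (\<Sum>x\<in>T. qinner n (h x) g)"
  unfolding qinner_def by (simp add: sum_distrib_right sum.swap[of _ T])

lemma qinner_scale_right: "qinner n f (\<lambda>z. c * g z) = c * qinner n f g"
  unfolding qinner_def by (simp add: sum_distrib_left mult.left_commute)

lemma qinner_scale_left: "qinner n (\<lambda>z. c * f z) g = cnj c * qinner n f g"
  unfolding qinner_def by (simp add: sum_distrib_left mult.assoc)

lemma cnj_qinner: "cnj (qinner n f g) = qinner n g f"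
  unfolding qinner_def by (simp add: mult.commute)

lemma qinner_self: "qinner n f f = of_real (\<Sum>z\<in>bitstrs n. (cmod (f z))\<^sup>2)"
  unfolding qinner_def of_real_sum
  by (rule sum.cong[OF refl]) (simp add: complex_norm_square mult.commute del: of_real_power)

lemma qinner_Cauchy_Schwarz: "(cmod (qinner n f g))\<^sup>2 \<le> Re (qinner n f f) * Re (qinner n g g)"
proof -
  have "cmod (qinner n f g) \<le> (\<Sum>z\<in>bitstrs n. cmod (f z) * cmod (g z))"
    unfolding qinner_def by (rule order.trans[OF norm_sum]) (simp add: norm_mult)
  moreover have "(\<Sum>z\<in>bitstrs n. cmod (f z) * cmod (g z))\<^sup>2 \<le>
      (\<Sum>z\<in>bitstrs n. (cmod (f z))\<^sup>2) * (\<Sum>z\<in>bitstrs n. (cmod (g z))\<^sup>2)"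
    by (rule Cauchy_Schwarz_ineq_sum)
  ultimately show ?thesis
    unfolding qinner_self Re_complex_of_real by (meson norm_ge_zero order_trans power_mono)
qed

lemma weyl_scale: "weyl n x (\<lambda>z. c * g z) = (\<lambda>z. c * weyl n x g z)"
  by (auto simp: weyl_def fun_eq_iff)

lemma qinner_weyl_adjoint:
  assumes "x \<in> F2 n"
  shows "qinner n f (weyl n x g) = qinner n (weyl n x f) g"
proof -
  obtain a b where x: "x = (a, b)" by (cases x)
  have a: "a \<in> bitstrs n" using assms x by (auto simp: F2_def)
  let ?k = "bdot n a b"
  have bij: "bij_betw (\<lambda>u. bxor u a) (bitstrs n) (bitstrs n)"
    by (rule bij_betwI[where g = "\<lambda>u. bxor u a"]) (auto simp: bxor_in_bitstrs a)
  have "qinner n (weyl n x f) g =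
      (\<Sum>z\<in>bitstrs n. cnj (\<i> ^ ?k * (-1) ^ bdot n b (bxor z a) * f (bxor z a)) * g z)"
    by (simp add: qinner_def weyl_def x)
  also have "\<dots> = (\<Sum>u\<in>bitstrs n. cnj (\<i> ^ ?k * (-1) ^ bdot n b u * f u) * g (bxor u a))"
    using sum.reindex_bij_betw[OF bij, of "\<lambda>u. cnj (\<i> ^ ?k * (-1) ^ bdot n b u * f u) * g (bxor u a)"]
    by simp
  also have "\<dots> = (\<Sum>u\<in>bitstrs n. cnj (f u) * (\<i> ^ ?k * (-1) ^ bdot n b (bxor u a) * g (bxor u a)))"
    by (rule sum.cong[OF refl])
      (simp add: power_minus[of \<i>] minus_one_power_bdot_bxor_right bdot_commute[of n b a])
  also have "\<dots> = qinner n f (weyl n x g)"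
    by (simp add: qinner_def weyl_def x)
  finally show ?thesis ..
qed

lemma Im_qinner_weyl_self:
  assumes "x \<in> F2 n"
  shows "Im (qinner n f (weyl n x f)) = 0"
proof -
  have "cnj (qinner n f (weyl n x f)) = qinner n f (weyl n x f)"
    unfolding cnj_qinner using qinner_weyl_adjoint[OF assms] by simp
  then show ?thesis
    by (metis Reals_cnj_iff complex_is_Real_iff)
qed

lemma weyl_mult_weyl:
  assumes "x \<in> F2 n" "y \<in> F2 n"
  shows "\<exists>c. \<forall>g. weyl n x (weyl n y g) = (\<lambda>z. c * weyl n (vxor x y) g z)"
proof -
  obtain a b where x: "x = (a, b)" by (cases x)
  obtain a' b' where y: "y = (a', b')" by (cases y)
  have a: "a \<in> bitstrs n" using assms x by (auto simp: F2_def)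
  define m where "m = bdot n (bxor a a') (bxor b b')"
  define c where "c = \<i> ^ bdot n a b * \<i> ^ bdot n a' b' * (-1) ^ bdot n b a' / \<i> ^ m"
  have "weyl n x (weyl n y g) z = c * weyl n (vxor x y) g z" for g z
  proof (cases "z \<in> bitstrs n")
    case False
    then show ?thesis by (simp add: weyl_def)
  next
    case True
    let ?w = "bxor z (bxor a a')"
    have "bxor z a \<in> bitstrs n" using True a by (rule bxor_in_bitstrs)
    then have "weyl n x (weyl n y g) z = \<i> ^ bdot n a b * (-1) ^ bdot n b (bxor ?w a') *
        (\<i> ^ bdot n a' b' * (-1) ^ bdot n b' ?w * g ?w)"
      using True by (simp add: weyl_def x y bxor_assoc)
    also have "\<dots> = c * (\<i> ^ m * (-1) ^ bdot n (bxor b b') ?w * g ?w)"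
      by (simp add: c_def minus_one_power_bdot_bxor_right minus_one_power_bdot_bxor_left field_simps)
    also have "\<dots> = c * weyl n (vxor x y) g z"
      using True by (simp add: weyl_def x y vxor_def m_def)
    finally show ?thesis .
  qed
  then show ?thesis by blast
qed

definition weyl_sign :: "nat \<Rightarrow> qstate \<Rightarrow> bits \<times> bits \<Rightarrow> complex" where
  "weyl_sign n phi x = (if weyl n x phi = phi then 1 else -1)"

definition signed_weyl :: "nat \<Rightarrow> qstate \<Rightarrow> bits \<times> bits \<Rightarrow> qstate \<Rightarrow> qstate" where
  "signed_weyl n phi x g = (\<lambda>z. weyl_sign n phi x * weyl n x g z)"

lemma weyl_sign_cases: "weyl_sign n phi x = 1 \<or> weyl_sign n phi x = -1"
  by (simp add: weyl_sign_def)

lemma weyl_sign_mult_self [simp]: "weyl_sign n phi x * weyl_sign n phi x = 1"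
  by (simp add: weyl_sign_def)

lemma cnj_weyl_sign [simp]: "cnj (weyl_sign n phi x) = weyl_sign n phi x"
  by (simp add: weyl_sign_def)

lemma weyl_eq_weyl_sign_mult:
  "x \<in> Weyl n phi \<Longrightarrow> weyl n x phi = (\<lambda>z. weyl_sign n phi x * phi z)"
  by (auto simp: Weyl_def weyl_sign_def)

lemma signed_weyl_fixes: "x \<in> Weyl n phi \<Longrightarrow> signed_weyl n phi x phi = phi"
  by (simp add: signed_weyl_def weyl_eq_weyl_sign_mult mult.assoc[symmetric])

lemma qinner_signed_weyl_adjoint:
  "x \<in> F2 n \<Longrightarrow> qinner n f (signed_weyl n phi x g) = qinner n (signed_weyl n phi x f) g"
  by (simp add: signed_weyl_def qinner_scale_left qinner_scale_right qinner_weyl_adjoint)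

text \<open>The phase of \<open>W\<^sub>x W\<^sub>y\<close> relative to \<open>W\<^sub>x\<^sub>+\<^sub>y\<close> is pinned down by evaluating both sides at the
  common eigenvector \<open>\<phi>\<close>.\<close>
lemma signed_weyl_mult:
  assumes "x \<in> Weyl n phi" "y \<in> Weyl n phi" "vxor x y \<in> Weyl n phi" "phi z\<^sub>0 \<noteq> 0"
  shows "signed_weyl n phi x (signed_weyl n phi y g) = signed_weyl n phi (vxor x y) g"
proof -
  let ?s = "weyl_sign n phi"
  obtain c where c: "\<And>h. weyl n x (weyl n y h) = (\<lambda>z. c * weyl n (vxor x y) h z)"
    using weyl_mult_weyl[of x n y] assms(1,2) by (auto simp: Weyl_def)
  have product: "signed_weyl n phi x (signed_weyl n phi y h) =
      (\<lambda>z. ?s x * ?s y * c * weyl n (vxor x y) h z)" for h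
    by (simp add: signed_weyl_def weyl_scale c mult.assoc)
  have "phi = (\<lambda>z. ?s x * ?s y * c * ?s (vxor x y) * phi z)"
    using product[of phi] assms(1,2) weyl_eq_weyl_sign_mult[OF assms(3)]
    by (simp add: signed_weyl_fixes mult.assoc)
  then have "?s x * ?s y * c * ?s (vxor x y) = 1"
    using assms(4) by (metis mult_cancel_right2)
  then have "?s x * ?s y * c = ?s (vxor x y)"
    by (metis mult.assoc mult.right_neutral weyl_sign_mult_self)
  then show ?thesis
    unfolding product by (simp add: signed_weyl_def)
qed

lemma pdist_eq_signed_weyl:
  assumes "x \<in> Weyl n phi"
  shows "pdist n psi x = (Re (qinner n psi (signed_weyl n phi x psi)))\<^sup>2 / 2 ^ n"
proof -
  have "Im (qinner n psi (weyl n x psi)) = 0"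
    using assms by (intro Im_qinner_weyl_self) (auto simp: Weyl_def)
  then show ?thesis
    using weyl_sign_cases[of n phi x]
    by (auto simp: pdist_def signed_weyl_def qinner_scale_right power2_eq_square)
qed

text \<open>\<open>|T|\<^sup>-\<^sup>1 \<Sum>\<^sub>x signed_weyl x\<close> is the projector onto the joint eigenspace containing \<open>\<phi>\<close>; the
  left-hand side is \<open>|T| |\<langle>\<phi>|P\<psi>\<rangle>|\<^sup>2\<close> and the right-hand side is \<open>|T| \<langle>\<psi>|P|\<psi>\<rangle>\<close>.\<close>
lemma card_mult_overlap_le_sum_signed_weyl:
  assumes T: "F2_subspace n T" "T \<subseteq> Weyl n phi" and phi: "qinner n phi phi = 1"
  shows "real (card T) * (cmod (qinner n phi psi))\<^sup>2
    \<le> (\<Sum>x\<in>T. Re (qinner n psi (signed_weyl n phi x psi)))"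
proof -
  let ?U = "signed_weyl n phi"
  have TF: "T \<subseteq> F2 n" using T(1) by (simp add: F2_subspace_def)
  then have "finite T" using finite_F2 finite_subset by blast
  moreover have "T \<noteq> {}" using T(1) by (auto simp: F2_subspace_def)
  ultimately have card_pos: "real (card T) > 0" by (simp add: card_gt_0_iff)
  obtain z\<^sub>0 where z\<^sub>0: "phi z\<^sub>0 \<noteq> 0"
    using phi by (force simp: qinner_def)
  have adjoint: "qinner n f (?U x g) = qinner n (?U x f) g" if "x \<in> T" for x f g
    using that TF by (auto intro: qinner_signed_weyl_adjoint)
  have mult: "?U x (?U y g) = ?U (vxor x y) g" if "x \<in> T" "y \<in> T" for x y g
    using that T z\<^sub>0 by (intro signed_weyl_mult) (auto simp: F2_subspace_def)
  define v where "v = (\<lambda>z. \<Sum>x\<in>T. ?U x psi z)"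
  have "qinner n v v = (\<Sum>x\<in>T. \<Sum>y\<in>T. qinner n (?U x psi) (?U y psi))"
    unfolding v_def qinner_sum_left qinner_sum_right ..
  also have "\<dots> = (\<Sum>x\<in>T. \<Sum>y\<in>T. qinner n psi (?U (vxor x y) psi))"
    by (intro sum.cong refl) (simp add: adjoint[symmetric] mult)
  also have "\<dots> = (\<Sum>x\<in>T. \<Sum>y\<in>T. qinner n psi (?U y psi))"
    by (intro sum.cong refl F2_subspace_sum_translate[OF T(1)])
  finally have vv: "qinner n v v = of_nat (card T) * (\<Sum>x\<in>T. qinner n psi (?U x psi))"
    by simp
  have "qinner n phi v = (\<Sum>x\<in>T. qinner n (?U x phi) psi)"
    unfolding v_def qinner_sum_right by (intro sum.cong refl adjoint)
  also have "\<dots> = of_nat (card T) * qinner n phi psi"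
    using T(2) by (simp add: signed_weyl_fixes subsetD)
  finally have phiv: "qinner n phi v = of_nat (card T) * qinner n phi psi" .
  have "(real (card T))\<^sup>2 * (cmod (qinner n phi psi))\<^sup>2 \<le> real (card T) * (\<Sum>x\<in>T. Re (qinner n psi (?U x psi)))"
    using qinner_Cauchy_Schwarz[of n phi v] phi
    by (simp add: phiv vv norm_mult power_mult_distrib)
  then show ?thesis
    using card_pos by (simp add: power2_eq_square mult.assoc)
qed

theorem sum_pdist_ge_overlap:
  assumes "F2_subspace n T" "T \<subseteq> Weyl n phi" "qinner n phi phi = 1"
  shows "(\<Sum>x\<in>T. pdist n psi x) \<ge> real (card T) / 2 ^ n * ((cmod (qinner n phi psi))\<^sup>2)\<^sup>2"
proof -
  define F where "F = (cmod (qinner n phi psi))\<^sup>2"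
  define r where "r x = Re (qinner n psi (signed_weyl n phi x psi))" for x
  have sum_r: "real (card T) * F \<le> (\<Sum>x\<in>T. r x)"
    unfolding F_def r_def using assms by (rule card_mult_overlap_le_sum_signed_weyl)
  have "real (card T) * (real (card T) * F\<^sup>2) = (real (card T) * F)\<^sup>2"
    by (simp add: power2_eq_square)
  also have "\<dots> \<le> (\<Sum>x\<in>T. r x)\<^sup>2"
    using sum_r by (intro power_mono) (auto simp: F_def)
  also have "\<dots> \<le> real (card T) * (\<Sum>x\<in>T. (r x)\<^sup>2)"
    using sum_squared_le_sum_of_squares[of r T] by (simp add: mult.commute)
  finally have "real (card T) * F\<^sup>2 \<le> (\<Sum>x\<in>T. (r x)\<^sup>2)"
    by (cases "card T = 0") (auto simp: sum_nonneg)
  moreover have "(\<Sum>x\<in>T. pdist n psi x) = (\<Sum>x\<in>T. (r x)\<^sup>2) / 2 ^ n"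
    unfolding r_def sum_divide_distrib
    by (intro sum.cong refl pdist_eq_signed_weyl) (use assms(2) in blast)
  ultimately show ?thesis
    by (simp add: F_def divide_right_mono)
qed

theorem corollary5p3:
  fixes n :: nat and psi phi :: qstate and T :: "(bits \<times> bits) set"
  assumes "is_state n psi"
    and "stabilizer_state n phi"
    and "\<forall>phi'. stabilizer_state n phi' \<longrightarrow>
           (cmod (qinner n phi' psi))\<^sup>2 \<le> (cmod (qinner n phi psi))\<^sup>2"
    and "F2_subspace n T"
    and "T \<subseteq> Weyl n phi"
  shows "(\<Sum>x\<in>T. pdist n psi x) \<ge> real (card T) / 2 ^ n * (stab_fidelity n psi)\<^sup>2"
proof -
  have "stab_fidelity n psi = (cmod (qinner n phi psi))\<^sup>2"
    unfolding stab_fidelity_def by (rule cSup_eq_maximum) (use assms(2,3) in auto)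
  moreover have "qinner n phi phi = 1"
    using assms(2) by (simp add: stabilizer_state_def is_state_def)
  ultimately show ?thesis
    using sum_pdist_ge_overlap[OF assms(4,5)] by simp
qed

end
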